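(* Let $Q\in\mathcal{P}$ have balance coefficient $\beta>\tfrac12$. Then for every $0<v<4(\beta-\tfrac12)$, $$D^*(v,Q)=\mathrm{KL}_2\!\left(\beta-\tfrac{v}{2},\,\beta\right).$$
   Context: Let $(\Omega,\mathcal{F},\mu)$ be a finite or $\sigma$-finite measure space, and let $\mathcal{P}$ be the set of probability measures on $(\Omega,\mathcal{F})$ absolutely continuous with respect to $\mu$. For $P,Q\in\mathcal{P}$ the lower-case letters $p,q$ denote their densities with respect to $\mu$. The Kullback–Leibler divergence is $D(P\Vert Q)=\int \ln\frac{dP}{dQ}\,dP$ if $P\ll Q$, and $+\infty$ otherwise. The total variation distance is $V(P,Q)=\int_\Omega|p-q|\,d\mu$. For $v>0$ define $D^*(v,Q)=\inf\{D(P\Vert Q): P\in\mathcal{P},\ V(P,Q)\ge v\}$, with $\inf\emptyset=+\infty$. For $p,q\in[0,1]$ let $\mathrm{KL}_2(p,q)=p\ln\frac{p}{q}+(1-p)\ln\frac{1-p}{1-q}$, with the conventions $0\ln(0/x)=0$ and $a\ln(a/0)=+\infty$ for $a>0$. The range of $Q$ is $\mathcal{R}(Q)=\{Q(A):A\in\mathcal{F}\}$. The balance coefficient of $Q$ is $\beta=\inf\{x\in\mathcal{R}(Q): x\ge\tfrac12\}$. *)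

theory Defs
  imports "HOL-Probability.Probability"
begin

definition probs :: "'a measure \<Rightarrow> 'a measure set" where
  "probs \<mu> = {P. prob_space P \<and> sets P = sets \<mu> \<and> absolutely_continuous \<mu> P}"

definition dens :: "'a measure \<Rightarrow> 'a measure \<Rightarrow> 'a \<Rightarrow> real" where
  "dens \<mu> P = (\<lambda>x. enn2real (RN_deriv \<mu> P x))"

text \<open>For P abs. continuous wrt Q, the negative part of ln(dP/dQ) is always P-integrable,
so the integral either is finite (integrable case) or equals +infinity.\<close>
definition KL_div :: "'a measure \<Rightarrow> 'a measure \<Rightarrow> ereal" where
  "KL_div P Q =
     (if absolutely_continuous Q P \<and> sets P = sets Q then
        (if integrable P (\<lambda>x. ln (enn2real (RN_deriv Q P x)))
         then ereal (\<integral>x. ln (enn2real (RN_deriv Q P x)) \<partial>P)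
         else \<infinity>)
      else \<infinity>)"

definition TV :: "'a measure \<Rightarrow> 'a measure \<Rightarrow> 'a measure \<Rightarrow> real" where
  "TV \<mu> P Q = (\<integral>x. \<bar>dens \<mu> P x - dens \<mu> Q x\<bar> \<partial>\<mu>)"

text \<open>D*(v,Q) = inf of D(P||Q) over P in probs mu with V(P,Q) >= v (Inf of empty = infinity).\<close>
definition Dstar :: "'a measure \<Rightarrow> real \<Rightarrow> 'a measure \<Rightarrow> ereal" where
  "Dstar \<mu> v Q = Inf {KL_div P Q | P. P \<in> probs \<mu> \<and> TV \<mu> P Q \<ge> v}"

definition xlog_term :: "real \<Rightarrow> real \<Rightarrow> ereal" where
  "xlog_term a b = (if a = 0 then 0 else if b = 0 then \<infinity> else ereal (a * ln (a / b)))"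

definition KL2 :: "real \<Rightarrow> real \<Rightarrow> ereal" where
  "KL2 p q = xlog_term p q + xlog_term (1 - p) (1 - q)"

definition range_meas :: "'a measure \<Rightarrow> real set" where
  "range_meas Q = {measure Q A | A. A \<in> sets Q}"

definition balance_coeff :: "'a measure \<Rightarrow> real" where
  "balance_coeff Q = Inf {x \<in> range_meas Q. x \<ge> 1/2}"

end

theory Submission
  imports Defs
begin

text \<open>
  Write \<open>\<beta>\<close> for the
  balance coefficient of \<open>Q\<close>, \<open>d = v/2\<close> and \<open>kl(a, b)\<close> for the binary divergence.

  For \<open>P\<close> with \<open>V(P, Q) \<ge> v\<close>, Scheffe's identity gives an event \<open>A\<close>
  (where \<open>p > q\<close>) with \<open>P(A) - Q(A) \<ge> d\<close>.  Data processing for the partition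
  \<open>{A, \<Omega> - A}\<close> bounds \<open>D(P\<parallel>Q)\<close> below by \<open>kl(P(A), Q(A))\<close>, and since \<open>Q(A)\<close> or
  \<open>1 - Q(A)\<close> is at least \<open>\<beta>\<close>, an elementary analysis of \<open>kl\<close> shows
  \<open>kl(a, b) \<ge> kl(\<beta> - d, \<beta>)\<close> whenever \<open>|a - b| \<ge> d\<close>.

  For every attained value \<open>x = Q(B) \<ge> \<beta>\<close>, reweighting \<open>Q\<close> by constant
  factors on \<open>B\<close> and its complement yields \<open>P\<close> with \<open>V(P, Q) = 2d\<close> and
  \<open>D(P\<parallel>Q) = kl(x - d, x)\<close>; letting \<open>x\<close> decrease to \<open>\<beta>\<close> and using continuity gives the claim.
\<close>


definition bin_kl :: "real \<Rightarrow> real \<Rightarrow> real" where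
  "bin_kl a b = a * ln (a / b) + (1 - a) * ln ((1 - a) / (1 - b))"

lemma KL2_eq_bin_kl:
  assumes "0 < a" "a < 1" "0 < b" "b < 1"
  shows "KL2 a b = ereal (bin_kl a b)"
  using assms unfolding KL2_def bin_kl_def xlog_term_def by simp

lemma bin_kl_swap: "bin_kl a b = bin_kl (1 - a) (1 - b)"
  unfolding bin_kl_def by (simp add: algebra_simps)

lemma xlnx_continuous: "continuous_on {0..} (\<lambda>x::real. x * ln x)"
proof -
  have "((\<lambda>y::real. - (ln y / y)) \<longlongrightarrow> - 0) at_top"
    by (intro tendsto_minus ln_x_over_x_tendsto_0)
  moreover have "eventually (\<lambda>y::real. - (ln y / y) = inverse y * ln (inverse y)) at_top"
    using eventually_gt_at_top[of 0] by eventually_elim (simp add: ln_inverse divide_inverse)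
  ultimately have lim0: "((\<lambda>x::real. x * ln x) \<longlongrightarrow> 0) (at_right 0)"
    unfolding filterlim_at_right_to_top by (simp add: tendsto_cong)
  show ?thesis
    unfolding continuous_on_def
  proof
    fix x :: real assume "x \<in> {0..}"
    show "((\<lambda>x. x * ln x) \<longlongrightarrow> x * ln x) (at x within {0..})"
    proof (cases "x = 0")
      case True
      then show ?thesis using lim0 by (simp add: at_within_Ici_at_right)
    next
      case False
      with \<open>x \<in> {0..}\<close> have "isCont (\<lambda>x. x * ln x) x" by (auto intro!: continuous_intros)
      then show ?thesis using isCont_def tendsto_within_subset by blast
    qed
  qed
qed

lemma continuous_on_xlog:
  fixes f :: "real \<Rightarrow> real"
  assumes "continuous_on S f" "\<And>s. s \<in> S \<Longrightarrow> 0 \<le> f s" "0 < y"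
  shows "continuous_on S (\<lambda>s. f s * ln (f s / y))"
proof -
  have "continuous_on S (\<lambda>s. f s / y)" using assms(1,3) by (intro continuous_intros) auto
  then have "continuous_on S (\<lambda>s. (f s / y) * ln (f s / y))"
    by (rule continuous_on_compose2[OF xlnx_continuous]) (use assms(2,3) in auto)
  then have "continuous_on S (\<lambda>s. y * ((f s / y) * ln (f s / y)))"
    by (rule continuous_on_mult_left)
  then show ?thesis using assms(3) by simp
qed

lemma DERIV_xlog:
  fixes f :: "real \<Rightarrow> real"
  assumes "(f has_real_derivative f') (at s)" "0 < f s" "0 < y"
  shows "((\<lambda>s. f s * ln (f s / y)) has_real_derivative f' * (ln (f s / y) + 1)) (at s)"
proof -
  have "((\<lambda>s. f s * ln (f s / y)) has_real_derivative
          f' * ln (f s / y) + f s * (f' / y / (f s / y))) (at s)"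
    using assms by (auto intro!: derivative_eq_intros)
  moreover have "f' * ln (f s / y) + f s * (f' / y / (f s / y)) = f' * (ln (f s / y) + 1)"
    using assms by (simp add: field_simps)
  ultimately show ?thesis by simp
qed

text \<open>Tangent-line (Gibbs) bound, from \<open>ln t \<le> t - 1\<close>: for every \<open>c > 0\<close>,
  \<open>x ln (x / y) \<ge> x ln c + x - c y\<close>, with equality at \<open>c = x / y\<close>.\<close>

lemma xlog_tangent:
  fixes x y c :: real
  assumes "0 \<le> x" "0 < y" "0 < c"
  shows "x * ln c + x - c * y \<le> x * ln (x / y)"
proof (cases "x = 0")
  case False
  with assms have x: "0 < x" by simp
  have "ln (c * y / x) \<le> c * y / x - 1"
    using x assms by (intro ln_le_minus_one) simp
  also have "ln (c * y / x) = ln c - ln (x / y)"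
    using x assms by (simp add: ln_div ln_mult)
  finally have "x * (ln c - ln (x / y)) \<le> x * (c * y / x - 1)"
    using x by (intro mult_left_mono) auto
  then show ?thesis using x by (simp add: algebra_simps)
qed (use assms in simp)

lemma bin_kl_tangent:
  assumes "0 \<le> a" "a \<le> 1" "0 < b" "b < 1" "0 < c1" "0 < c2"
  shows "a * ln c1 + (1 - a) * ln c2 + 1 - c1 * b - c2 * (1 - b) \<le> bin_kl a b"
  using xlog_tangent[of a b c1] xlog_tangent[of "1 - a" "1 - b" c2] assms
  unfolding bin_kl_def by simp

lemma ln_le_half_diff_inverse:
  fixes x :: real assumes "1 \<le> x" shows "ln x \<le> (x - 1 / x) / 2"
proof -
  let ?g = "\<lambda>x::real. (x - 1 / x) / 2 - ln x"
  have "?g 1 \<le> ?g x"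
  proof (rule DERIV_nonneg_imp_increasing_open[of 1 x ?g])
    fix t :: real assume t: "1 < t" "t < x"
    have "(?g has_real_derivative (1 - 1 / t)\<^sup>2 / 2) (at t)"
      using t by (auto intro!: derivative_eq_intros simp: power2_eq_square field_simps)
    then show "\<exists>y. (?g has_real_derivative y) (at t) \<and> 0 \<le> y" by auto
  qed (use assms in \<open>auto intro!: continuous_intros\<close>)
  then show ?thesis by simp
qed

lemma log_ratio_bound:
  fixes u w :: real
  assumes "0 < u" "u < w" "w < 1" "1 - w \<le> u"
  shows "ln (w / u) + ln ((1 - u) / (1 - w)) \<le> (w - u) / (w * (1 - w))"
proof -
  have "ln (w / u) + ln ((1 - u) / (1 - w))
      \<le> (w - u) * ((w + u) / (2 * u * w)) + (w - u) * ((2 - u - w) / (2 * (1 - u) * (1 - w)))"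
    using ln_le_half_diff_inverse[of "w / u"] ln_le_half_diff_inverse[of "(1 - u) / (1 - w)"] assms
    by (intro add_mono) (simp_all add: field_simps)
  also have "\<dots> = (w - u) * ((w + u) / (2 * u * w) + (2 - u - w) / (2 * (1 - u) * (1 - w)))"
    by (simp add: distrib_left)
  also have "\<dots> \<le> (w - u) * (1 / (w * (1 - w)))"
  proof (rule mult_left_mono)
    \<comment> \<open>generalising \<open>1 - u\<close>, \<open>1 - w\<close> to \<open>p\<close>, \<open>q\<close> keeps \<open>field_simps\<close> from rewriting them\<close>
    have common_denom: "A / (2 * u * w) + B / (2 * p * q) = (A * p * q + B * u * w) / (2 * u * w * p * q)"
      and cancel: "2 * u * p / (2 * u * w * p * q) = 1 / (w * q)"
      if "p \<noteq> 0" "q \<noteq> 0" for A B p q :: real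
      using that assms by (simp_all add: field_simps)
    have nz: "1 - u \<noteq> 0" "1 - w \<noteq> 0" using assms by auto
    have "(w + u) * (1 - u) * (1 - w) + (2 - u - w) * u * w - 2 * u * (1 - u) = (w - u) * (1 - w - u)"
      by (simp add: algebra_simps)
    moreover have "(w - u) * (1 - w - u) \<le> 0" using assms by (intro mult_nonneg_nonpos) auto
    ultimately have num: "(w + u) * (1 - u) * (1 - w) + (2 - u - w) * u * w \<le> 2 * u * (1 - u)"
      by linarith
    have "(w + u) / (2 * u * w) + (2 - u - w) / (2 * (1 - u) * (1 - w))
        = ((w + u) * (1 - u) * (1 - w) + (2 - u - w) * u * w) / (2 * u * w * (1 - u) * (1 - w))"
      using nz by (rule common_denom)
    also have "\<dots> \<le> 2 * u * (1 - u) / (2 * u * w * (1 - u) * (1 - w))"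
      using num assms by (intro divide_right_mono) auto
    also have "\<dots> = 1 / (w * (1 - w))"
      using nz by (rule cancel)
    finally show "(w + u) / (2 * u * w) + (2 - u - w) / (2 * (1 - u) * (1 - w)) \<le> 1 / (w * (1 - w))" .
  qed (use assms in simp)
  finally show ?thesis by simp
qed


text \<open>The tangent bound at the optimal point for \<open>(\<beta> - d, \<beta>)\<close> is nonincreasing in \<open>a\<close> and, by
  the slope estimate, nondecreasing in \<open>b\<close>.\<close>

lemma bin_kl_below_deviation:
  assumes d: "0 < d" and bd: "1 - \<beta> \<le> \<beta> - d" and \<beta>1: "\<beta> < 1"
    and b: "\<beta> \<le> b" "b < 1" and a: "0 \<le> a" "a \<le> b - d"
  shows "bin_kl (\<beta> - d) \<beta> \<le> bin_kl a b"
proof -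
  define c1 where "c1 = (\<beta> - d) / \<beta>"
  define c2 where "c2 = (1 - \<beta> + d) / (1 - \<beta>)"
  have \<beta>d: "0 < \<beta> - d" using bd \<beta>1 by linarith
  have c1: "0 < c1" "c1 \<le> 1" and c2: "1 \<le> c2"
    using \<beta>d d \<beta>1 unfolding c1_def c2_def by (auto simp: field_simps)
  have "c1 * \<beta> = \<beta> - d" "c2 * (1 - \<beta>) = 1 - \<beta> + d"
    using \<beta>d \<beta>1 d unfolding c1_def c2_def by auto
  then have c_sum: "c1 * \<beta> + c2 * (1 - \<beta>) = 1" by simp
  have kl_\<beta>: "bin_kl (\<beta> - d) \<beta> = (\<beta> - d) * ln c1 + (1 - \<beta> + d) * ln c2"
    unfolding bin_kl_def c1_def c2_def by (simp add: algebra_simps)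
  \<comment> \<open>makes the tangent bound at \<open>(c1, c2)\<close> nondecreasing in \<open>b\<close>\<close>
  have slope: "ln c2 - ln c1 \<le> c2 - c1"
  proof -
    have "ln c2 - ln c1 = ln (\<beta> / (\<beta> - d)) + ln ((1 - (\<beta> - d)) / (1 - \<beta>))"
      using \<beta>d \<beta>1 c1 unfolding c1_def c2_def by (simp add: ln_div algebra_simps)
    also have "\<dots> \<le> (\<beta> - (\<beta> - d)) / (\<beta> * (1 - \<beta>))"
      using \<beta>d \<beta>1 d bd by (intro log_ratio_bound) auto
    also have "\<dots> = c2 - c1"
    proof -
      have "\<beta> \<noteq> 0" "1 - \<beta> \<noteq> 0" using \<beta>d d \<beta>1 by auto
      then show ?thesis unfolding c1_def c2_def by (simp add: field_simps)
    qed
    finally show ?thesis .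
  qed
  have "a * ln c1 + (1 - a) * ln c2 + 1 - c1 * b - c2 * (1 - b) \<le> bin_kl a b"
    using a b d c1 c2 by (intro bin_kl_tangent) auto
  moreover have "(b - d) * (ln c1 - ln c2) \<le> a * (ln c1 - ln c2)"
    using a c1 c2 by (intro mult_right_mono_neg) auto
  moreover have "(b - d) * (ln c1 - ln c2) + ln c2 + 1 - c1 * b - c2 * (1 - b)
      = bin_kl (\<beta> - d) \<beta> + (b - \<beta>) * ((c2 - c1) - (ln c2 - ln c1))"
    unfolding kl_\<beta> using c_sum by (simp add: algebra_simps)
  moreover have "0 \<le> (b - \<beta>) * ((c2 - c1) - (ln c2 - ln c1))"
    using b slope by simp
  moreover have "a * ln c1 + (1 - a) * ln c2 = a * (ln c1 - ln c2) + ln c2"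
    by (simp add: algebra_simps)
  ultimately show ?thesis by linarith
qed

lemma bin_kl_above_mono:
  assumes "0 < b" "b < 1" "0 < d" "b + d \<le> a" "a \<le> 1"
  shows "bin_kl (b + d) b \<le> bin_kl a b"
proof (cases "b + d = 1")
  case True
  then have "a = b + d" using assms by linarith
  then show ?thesis by simp
next
  case False
  then have bd: "b + d < 1" using assms by linarith
  define c1 where "c1 = (b + d) / b"
  define c2 where "c2 = (1 - b - d) / (1 - b)"
  have c1: "1 \<le> c1" and c2: "0 < c2" "c2 \<le> 1"
    using assms bd unfolding c1_def c2_def by (auto simp: field_simps)
  have c_sum: "c1 * b + c2 * (1 - b) = 1"
    using assms bd unfolding c1_def c2_def by (simp add: field_simps)
  have "a * ln c1 + (1 - a) * ln c2 + 1 - c1 * b - c2 * (1 - b) \<le> bin_kl a b"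
    using assms c1 c2 by (intro bin_kl_tangent) auto
  moreover have "(b + d) * (ln c1 - ln c2) \<le> a * (ln c1 - ln c2)"
    using assms c1 c2 by (intro mult_right_mono) auto
  moreover have "bin_kl (b + d) b = (b + d) * (ln c1 - ln c2) + ln c2"
    unfolding bin_kl_def c1_def c2_def by (simp add: algebra_simps)
  moreover have "a * ln c1 + (1 - a) * ln c2 = a * (ln c1 - ln c2) + ln c2"
    by (simp add: algebra_simps)
  ultimately show ?thesis using c_sum by linarith
qed

text \<open>The derivative of \<open>s \<mapsto> kl(b + s, b) - kl(b - s, b)\<close> is nonnegative when \<open>b \<ge> 1/2\<close>.\<close>

lemma ln_symmetric_spread:
  fixes b s :: real
  assumes "1/2 \<le> b" "0 < s" "s < 1 - b"
  shows "ln ((1 - b - s) / (1 - b)) + ln ((1 - b + s) / (1 - b)) \<le> ln ((b + s) / b) + ln ((b - s) / b)"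
proof -
  have pos: "0 < 1 - b - s" "0 < 1 - b + s" "0 < b - s" "0 < b + s" "0 < b" "0 < 1 - b"
    using assms by auto
  have spread: "(p - s) / p * ((p + s) / p) = 1 - s ^ 2 / p ^ 2" if "p \<noteq> 0" for p
    using that by (simp add: field_simps power2_eq_square)
  have "(1 - b) ^ 2 \<le> b ^ 2" using assms by (intro power_mono) auto
  then have "s ^ 2 / b ^ 2 \<le> s ^ 2 / (1 - b) ^ 2"
    using pos by (intro divide_left_mono) auto
  then have prod_le: "(1 - b - s) / (1 - b) * ((1 - b + s) / (1 - b)) \<le> (b + s) / b * ((b - s) / b)"
    using spread[of "1 - b"] spread[of b] pos by (simp add: mult.commute)
  have "ln ((1 - b - s) / (1 - b)) + ln ((1 - b + s) / (1 - b))
      = ln ((1 - b - s) / (1 - b) * ((1 - b + s) / (1 - b)))"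
    using pos by (intro ln_mult_pos[symmetric]) simp_all
  also have "\<dots> \<le> ln ((b + s) / b * ((b - s) / b))"
    using prod_le pos by simp
  also have "\<dots> = ln ((b + s) / b) + ln ((b - s) / b)"
    using pos by (intro ln_mult_pos) simp_all
  finally show ?thesis .
qed

lemma bin_kl_reflection:
  assumes b: "1/2 \<le> b" "b < 1" and t: "0 \<le> t" "t \<le> 1 - b"
  shows "bin_kl (b - t) b \<le> bin_kl (b + t) b"
proof -
  define h where "h s = bin_kl (b + s) b - bin_kl (b - s) b" for s
  have h_eq: "h = (\<lambda>s. (b + s) * ln ((b + s) / b) + (1 - b - s) * ln ((1 - b - s) / (1 - b))
      - ((b - s) * ln ((b - s) / b) + (1 - b + s) * ln ((1 - b + s) / (1 - b))))"
    unfolding h_def bin_kl_def by (simp add: algebra_simps)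
  have "h 0 \<le> h t"
  proof (rule DERIV_nonneg_imp_increasing_open[OF t(1)])
    fix s assume s: "0 < s" "s < t"
    have pos: "0 < b + s" "0 < 1 - b - s" "0 < b - s" "0 < 1 - b + s" "0 < b" "0 < 1 - b"
      using s t b by auto
    have minus_one: "(b - 1) / (1 - b) = - 1" using pos by (simp add: field_simps)
    have d1: "((\<lambda>s. (b + s) * ln ((b + s) / b)) has_real_derivative 1 * (ln ((b + s) / b) + 1)) (at s)"
      and d2: "((\<lambda>s. (1 - b - s) * ln ((1 - b - s) / (1 - b))) has_real_derivative
              (- 1) * (ln ((1 - b - s) / (1 - b)) + 1)) (at s)"
      and d3: "((\<lambda>s. (b - s) * ln ((b - s) / b)) has_real_derivative (- 1) * (ln ((b - s) / b) + 1)) (at s)"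
      and d4: "((\<lambda>s. (1 - b + s) * ln ((1 - b + s) / (1 - b))) has_real_derivative
              1 * (ln ((1 - b + s) / (1 - b)) + 1)) (at s)"
      using pos by (auto intro!: DERIV_xlog derivative_eq_intros simp: minus_one)
    have "(h has_real_derivative
            (1 * (ln ((b + s) / b) + 1) + (- 1) * (ln ((1 - b - s) / (1 - b)) + 1))
          - ((- 1) * (ln ((b - s) / b) + 1) + 1 * (ln ((1 - b + s) / (1 - b)) + 1))) (at s)"
      unfolding h_eq by (rule DERIV_diff DERIV_add d1 d2 d3 d4)+
    moreover have "0 \<le> (1 * (ln ((b + s) / b) + 1) + (- 1) * (ln ((1 - b - s) / (1 - b)) + 1))
          - ((- 1) * (ln ((b - s) / b) + 1) + 1 * (ln ((1 - b + s) / (1 - b)) + 1))"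
      using ln_symmetric_spread[of b s] b s t by simp
    ultimately show "\<exists>y. (h has_real_derivative y) (at s) \<and> 0 \<le> y" by blast
  next
    have "continuous_on {0..t} (\<lambda>s. (b + s) * ln ((b + s) / b))"
      and "continuous_on {0..t} (\<lambda>s. (1 - b - s) * ln ((1 - b - s) / (1 - b)))"
      and "continuous_on {0..t} (\<lambda>s. (b - s) * ln ((b - s) / b))"
      and "continuous_on {0..t} (\<lambda>s. (1 - b + s) * ln ((1 - b + s) / (1 - b)))"
      using b t by (intro continuous_on_xlog continuous_intros; simp)+
    then show "continuous_on {0..t} h"
      unfolding h_eq by (intro continuous_on_add continuous_on_diff)
  qed
  then show ?thesis by (simp add: h_def bin_kl_def)
qed

lemma bin_kl_deviation:
  assumes d: "0 < d" and bd: "1 - \<beta> < \<beta> - d"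
    and a: "0 \<le> a" "a \<le> 1" and b: "0 < b" "b < 1"
    and balanced: "\<beta> \<le> b \<or> \<beta> \<le> 1 - b" and dev: "d \<le> \<bar>a - b\<bar>"
  shows "\<beta> < 1" and "bin_kl (\<beta> - d) \<beta> \<le> bin_kl a b"
proof -
  show \<beta>1: "\<beta> < 1" using balanced b by linarith
  \<comment> \<open>the case \<open>\<beta> \<le> b\<close>; the other one reduces to it by swapping the two outcomes\<close>
  have upper_half: "bin_kl (\<beta> - d) \<beta> \<le> bin_kl a' b'"
    if a': "0 \<le> a'" "a' \<le> 1" and b': "\<beta> \<le> b'" "b' < 1" and dev': "d \<le> \<bar>a' - b'\<bar>" for a' b'
  proof (cases "a' \<le> b' - d")
    case True
    then show ?thesis using d bd \<beta>1 a' b' by (intro bin_kl_below_deviation) auto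
  next
    case False
    then have up: "b' + d \<le> a'" using dev' by (auto simp: abs_if split: if_splits)
    have "bin_kl (\<beta> - d) \<beta> \<le> bin_kl (b' - d) b'"
      using d bd \<beta>1 b' by (intro bin_kl_below_deviation) auto
    also have "\<dots> \<le> bin_kl (b' + d) b'"
      using up a' b' bd d by (intro bin_kl_reflection) auto
    also have "\<dots> \<le> bin_kl a' b'"
      using up a' b' bd d by (intro bin_kl_above_mono) auto
    finally show ?thesis .
  qed
  show "bin_kl (\<beta> - d) \<beta> \<le> bin_kl a b"
  proof (cases "\<beta> \<le> b")
    case True
    then show ?thesis using upper_half a b dev by blast
  next
    case False
    then have "bin_kl (\<beta> - d) \<beta> \<le> bin_kl (1 - a) (1 - b)"
      using upper_half[of "1 - a" "1 - b"] balanced a b dev by auto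
    then show ?thesis by (simp add: bin_kl_swap[of a b])
  qed
qed

lemma probsD:
  assumes "P \<in> probs \<mu>"
  shows "prob_space P" "sets P = sets \<mu>" "space P = space \<mu>" "absolutely_continuous \<mu> P"
  using assms sets_eq_imp_space_eq[of P \<mu>] unfolding probs_def by auto

lemma dens_measurable[measurable]: "dens \<mu> P \<in> borel_measurable \<mu>"
  unfolding dens_def by measurable

lemma measure_eq_dens_integral:
  assumes "sigma_finite_measure \<mu>" "P \<in> probs \<mu>" "A \<in> sets \<mu>"
  shows "integrable \<mu> (\<lambda>x. dens \<mu> P x * indicator A x)"
    and "measure P A = (\<integral>x. dens \<mu> P x * indicator A x \<partial>\<mu>)"
proof -
  interpret sigma_finite_measure \<mu> by fact
  note P = probsD[OF assms(2)]
  interpret P: prob_space P by (rule P(1))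
  have sfP: "sigma_finite_measure P" by (rule P.sigma_finite_measure_axioms)
  have A_P: "A \<in> sets P" using assms(3) P by simp
  have ind: "(indicator A :: 'a \<Rightarrow> real) \<in> borel_measurable \<mu>" using assms(3) by measurable
  have "integrable P (indicator A :: 'a \<Rightarrow> real)"
    using A_P by (intro integrable_real_indicator) (auto simp: less_top[symmetric])
  then show "integrable \<mu> (\<lambda>x. dens \<mu> P x * indicator A x)"
    using RN_deriv_integrable[OF sfP P(4) P(2) ind] unfolding dens_def by simp
  have "measure P A = integral\<^sup>L P (indicator A)"
    using A_P by (simp add: sets.Int_space_eq2)
  also have "\<dots> = (\<integral>x. dens \<mu> P x * indicator A x \<partial>\<mu>)"
    using RN_deriv_integral[OF sfP P(4) P(2) ind] unfolding dens_def by simp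
  finally show "measure P A = (\<integral>x. dens \<mu> P x * indicator A x \<partial>\<mu>)" .
qed

lemma TV_eq_excess:
  assumes sf: "sigma_finite_measure \<mu>" and P: "P \<in> probs \<mu>" and Q: "Q \<in> probs \<mu>"
  defines "A \<equiv> {x \<in> space \<mu>. dens \<mu> Q x < dens \<mu> P x}"
  shows "A \<in> sets \<mu>" and "TV \<mu> P Q = 2 * (measure P A - measure Q A)"
proof -
  show A: "A \<in> sets \<mu>" unfolding A_def by measurable
  have \<Omega>: "space \<mu> \<in> sets \<mu>" by simp
  define p where "p = dens \<mu> P"
  define q where "q = dens \<mu> Q"
  note int = measure_eq_dens_integral(1)[OF sf P A] measure_eq_dens_integral(1)[OF sf Q A]
    measure_eq_dens_integral(1)[OF sf P \<Omega>] measure_eq_dens_integral(1)[OF sf Q \<Omega>]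
  note eq = measure_eq_dens_integral(2)[OF sf P A] measure_eq_dens_integral(2)[OF sf Q A]
    measure_eq_dens_integral(2)[OF sf P \<Omega>] measure_eq_dens_integral(2)[OF sf Q \<Omega>]
  have pointwise: "\<bar>p x - q x\<bar> = 2 * (p x * indicator A x - q x * indicator A x)
      - (p x * indicator (space \<mu>) x - q x * indicator (space \<mu>) x)" if "x \<in> space \<mu>" for x
    using that unfolding A_def p_def q_def by (auto simp: indicator_def)
  have "TV \<mu> P Q = (\<integral>x. 2 * (p x * indicator A x - q x * indicator A x)
      - (p x * indicator (space \<mu>) x - q x * indicator (space \<mu>) x) \<partial>\<mu>)"
    unfolding TV_def p_def[symmetric] q_def[symmetric]
    by (rule Bochner_Integration.integral_cong[OF refl pointwise])
  also have "\<dots> = 2 * (measure P A - measure Q A) - (measure P (space \<mu>) - measure Q (space \<mu>))"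
    using int eq unfolding p_def q_def by simp
  also have "\<dots> = 2 * (measure P A - measure Q A)"
    using prob_space.prob_space[OF probsD(1)[OF P]] prob_space.prob_space[OF probsD(1)[OF Q]]
      probsD(3)[OF P] probsD(3)[OF Q] by simp
  finally show "TV \<mu> P Q = 2 * (measure P A - measure Q A)" .
qed

text \<open>It follows by integrating the tangent bound
  \<open>f ln f \<ge> (ln c + 1) f - c\<close> for the density \<open>f = dP/dQ\<close> with \<open>c = P(S) / Q(S)\<close>.\<close>

lemma log_sum_on_event:
  assumes Q: "prob_space Q" and P: "prob_space P" and ac: "absolutely_continuous Q P"
    and sets_eq: "sets P = sets Q" and int: "integrable P (\<lambda>x. ln (enn2real (RN_deriv Q P x)))"
    and S: "S \<in> sets Q"
  shows "measure P S * ln (measure P S / measure Q S)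
          \<le> (\<integral>x. ln (enn2real (RN_deriv Q P x)) * indicator S x \<partial>P)"
proof -
  interpret Q: prob_space Q by fact
  interpret P: prob_space P by fact
  have sfP: "sigma_finite_measure P" by (rule P.sigma_finite_measure_axioms)
  define f where "f x = enn2real (RN_deriv Q P x)" for x
  have [measurable]: "f \<in> borel_measurable Q" unfolding f_def by measurable
  have S_P: "S \<in> sets P" using S sets_eq by simp
  have m_log: "(\<lambda>x. ln (f x) * indicator S x) \<in> borel_measurable Q"
    and m_ind: "(indicator S :: 'a \<Rightarrow> real) \<in> borel_measurable Q" using S by measurable
  note RN_int = Q.RN_deriv_integral[OF sfP ac sets_eq] and RN_intble = Q.RN_deriv_integrable[OF sfP ac sets_eq]
  have lhs_eq: "(\<integral>x. ln (f x) * indicator S x \<partial>P) = (\<integral>x. f x * (ln (f x) * indicator S x) \<partial>Q)"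
    using RN_int[OF m_log] unfolding f_def .
  have int_log: "integrable Q (\<lambda>x. f x * (ln (f x) * indicator S x))"
    using RN_intble[OF m_log] int S_P unfolding f_def by (simp add: integrable_real_mult_indicator)
  have PS_eq: "measure P S = (\<integral>x. f x * indicator S x \<partial>Q)"
    using RN_int[OF m_ind] S_P unfolding f_def by (simp add: sets.Int_space_eq2)
  have int_f: "integrable Q (\<lambda>x. f x * indicator S x)"
    using RN_intble[OF m_ind] S_P unfolding f_def
    by (simp add: integrable_real_indicator less_top[symmetric])
  show ?thesis
  proof (cases "measure P S = 0")
    case True
    then have "AE x in P. ln (f x) * indicator S x = 0"
      using S_P by (intro AE_I'[of S]) (auto simp: P.emeasure_eq_measure null_sets_def indicator_def)
    then have "(\<integral>x. ln (f x) * indicator S x \<partial>P) = 0" by (rule integral_eq_zero_AE)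
    then show ?thesis using True unfolding f_def by simp
  next
    case False
    then have PS_pos: "0 < measure P S" by (simp add: zero_less_measure_iff)
    have QS_pos: "0 < measure Q S"
    proof (rule ccontr)
      assume "\<not> 0 < measure Q S"
      then have "emeasure P S = 0"
        using absolutely_continuousD[OF ac S] by (simp add: Q.emeasure_eq_measure zero_less_measure_iff)
      then show False using False by (simp add: P.emeasure_eq_measure)
    qed
    define c where "c = measure P S / measure Q S"
    have c_pos: "0 < c" unfolding c_def using PS_pos QS_pos by simp
    have int_c: "integrable Q (\<lambda>x. c * indicator S x)"
      using S by (intro integrable_mult_right integrable_real_indicator) (auto simp: less_top[symmetric])
    have int_f': "integrable Q (\<lambda>x. (ln c + 1) * (f x * indicator S x))"
      using int_f by (rule integrable_mult_right)
    have "measure P S * ln c = (ln c + 1) * measure P S - c * measure Q S"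
      unfolding c_def using QS_pos by (simp add: algebra_simps)
    also have "\<dots> = (\<integral>x. (ln c + 1) * (f x * indicator S x) - c * indicator S x \<partial>Q)"
      by (simp only: Bochner_Integration.integral_diff[OF int_f' int_c] integral_mult_right_zero PS_eq)
         (simp add: S sets.Int_space_eq2)
    also have "\<dots> \<le> (\<integral>x. f x * (ln (f x) * indicator S x) \<partial>Q)"
    proof (rule integral_mono[OF Bochner_Integration.integrable_diff[OF int_f' int_c] int_log])
      fix x
      have "f x * ln c + f x - c \<le> f x * ln (f x)"
        using xlog_tangent[of "f x" 1 c] c_pos unfolding f_def by simp
      then show "(ln c + 1) * (f x * indicator S x) - c * indicator S x \<le> f x * (ln (f x) * indicator S x)"
        by (simp add: indicator_def algebra_simps)
    qed
    finally show ?thesis using lhs_eq unfolding c_def f_def by simp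
  qed
qed

lemma KL_div_ge_bin_kl:
  assumes Q: "prob_space Q" and P: "prob_space P" and S: "S \<in> sets Q"
  shows "ereal (bin_kl (measure P S) (measure Q S)) \<le> KL_div P Q"
proof (cases "absolutely_continuous Q P \<and> sets P = sets Q \<and>
              integrable P (\<lambda>x. ln (enn2real (RN_deriv Q P x)))")
  case True
  then have ac: "absolutely_continuous Q P" and sets_eq: "sets P = sets Q"
    and int: "integrable P (\<lambda>x. ln (enn2real (RN_deriv Q P x)))" by auto
  interpret Q: prob_space Q by fact
  interpret P: prob_space P by fact
  define g where "g x = ln (enn2real (RN_deriv Q P x))" for x
  have space_eq: "space P = space Q" using sets_eq by (rule sets_eq_imp_space_eq)
  have S': "space Q - S \<in> sets Q" using S by auto
  have int_S: "integrable P (\<lambda>x. g x * indicator S x)"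
    and int_S': "integrable P (\<lambda>x. g x * indicator (space Q - S) x)"
    using int S S' sets_eq unfolding g_def by (auto intro: integrable_real_mult_indicator)
  have "(\<integral>x. g x \<partial>P) = (\<integral>x. g x * indicator S x + g x * indicator (space Q - S) x \<partial>P)"
    by (rule Bochner_Integration.integral_cong) (auto simp: space_eq indicator_def)
  also have "\<dots> = (\<integral>x. g x * indicator S x \<partial>P) + (\<integral>x. g x * indicator (space Q - S) x \<partial>P)"
    using int_S int_S' by simp
  finally have split: "(\<integral>x. g x \<partial>P) = \<dots>" .
  have "measure P (space Q - S) = 1 - measure P S" "measure Q (space Q - S) = 1 - measure Q S"
    using P.prob_compl[of S] Q.prob_compl[of S] S sets_eq space_eq by auto
  then have "bin_kl (measure P S) (measure Q S) \<le> (\<integral>x. g x \<partial>P)"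
    using split log_sum_on_event[OF Q P ac sets_eq int S] log_sum_on_event[OF Q P ac sets_eq int S']
    unfolding bin_kl_def g_def by simp
  then show ?thesis using True unfolding KL_div_def g_def by simp
next
  case False
  then show ?thesis unfolding KL_div_def by auto
qed

lemma balance_coeff_le:
  assumes "prob_space Q" "x \<in> range_meas Q" "1/2 \<le> x"
  shows "balance_coeff Q \<le> x"
  unfolding balance_coeff_def using assms by (intro cInf_lower bdd_belowI[of _ "1/2"]) auto

lemma one_in_range_meas: "prob_space Q \<Longrightarrow> 1 \<in> range_meas Q"
  unfolding range_meas_def using prob_space.prob_space by force

lemma balance_coeff_le_1: "prob_space Q \<Longrightarrow> balance_coeff Q \<le> 1"
  using balance_coeff_le one_in_range_meas by fastforce

text \<open>Since the range of \<open>Q\<close> is closed under complements, every event or its complement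
  has probability at least \<open>\<beta>\<close>.\<close>

lemma balance_coeff_le_event_or_compl:
  assumes Q: "prob_space Q" and A: "A \<in> sets Q"
  shows "balance_coeff Q \<le> measure Q A \<or> balance_coeff Q \<le> 1 - measure Q A"
proof -
  have "measure Q A \<in> range_meas Q"
    using A unfolding range_meas_def by auto
  moreover have "1 - measure Q A \<in> range_meas Q"
    using A prob_space.prob_compl[OF Q A] unfolding range_meas_def
    by (intro CollectI exI[of _ "space Q - A"]) auto
  ultimately show ?thesis
    by (cases "1/2 \<le> measure Q A") (simp_all add: balance_coeff_le[OF Q])
qed

lemma excess_event_nontrivial:
  assumes Q: "prob_space Q" and P: "prob_space P" and ac: "absolutely_continuous Q P"
    and sets_eq: "sets P = sets Q" and A: "A \<in> sets Q"
    and excess: "0 < d" "d \<le> measure P A - measure Q A"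
  shows "0 < measure Q A" "measure Q A < 1"
proof -
  interpret Q: prob_space Q by fact
  interpret P: prob_space P by fact
  have null_transfer: "measure P B = 0" if "B \<in> sets Q" "measure Q B = 0" for B
    using absolutely_continuousD[OF ac that(1)] that
    by (simp add: Q.emeasure_eq_measure P.emeasure_eq_measure)
  show "0 < measure Q A"
    using null_transfer[OF A] excess by (metis measure_nonneg order_le_less diff_zero not_less)
  have space_eq: "space P = space Q" using sets_eq by (rule sets_eq_imp_space_eq)
  show "measure Q A < 1"
  proof (rule ccontr)
    assume "\<not> measure Q A < 1"
    then have "measure Q (space Q - A) = 0" using Q.prob_compl[OF A] Q.prob_le_1[of A] by simp
    then have "measure P (space Q - A) = 0" using A by (intro null_transfer) auto
    then have "measure P A = 1" using P.prob_compl[of A] A sets_eq space_eq by simp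
    then show False using excess \<open>\<not> measure Q A < 1\<close> by simp
  qed
qed

lemma KL_div_lower_bound:
  assumes sf: "sigma_finite_measure \<mu>" and Q: "Q \<in> probs \<mu>" and P: "P \<in> probs \<mu>"
    and v: "0 < v" "v < 4 * (balance_coeff Q - 1/2)" and tv: "v \<le> TV \<mu> P Q"
  shows "KL2 (balance_coeff Q - v/2) (balance_coeff Q) \<le> KL_div P Q"
proof (cases "absolutely_continuous Q P")
  case True
  define \<beta> d where "\<beta> = balance_coeff Q" and "d = v / 2"
  note Qs = probsD[OF Q] and Ps = probsD[OF P]
  define A where "A = {x \<in> space \<mu>. dens \<mu> Q x < dens \<mu> P x}"
  have A: "A \<in> sets Q" and "TV \<mu> P Q = 2 * (measure P A - measure Q A)"
    using TV_eq_excess[OF sf P Q] Qs(2) unfolding A_def by auto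
  then have excess: "d \<le> measure P A - measure Q A" using tv unfolding d_def by simp
  have d: "0 < d" and bd: "1 - \<beta> < \<beta> - d" using v unfolding \<beta>_def d_def by auto
  have QA: "0 < measure Q A" "measure Q A < 1"
    using excess_event_nontrivial[OF Qs(1) Ps(1) True _ A d excess] Ps(2) Qs(2) by auto
  have "0 \<le> measure P A" "measure P A \<le> 1" using prob_space.prob_le_1[OF Ps(1)] by auto
  moreover have "\<beta> \<le> measure Q A \<or> \<beta> \<le> 1 - measure Q A"
    unfolding \<beta>_def by (rule balance_coeff_le_event_or_compl[OF Qs(1) A])
  moreover have "d \<le> \<bar>measure P A - measure Q A\<bar>" using excess by linarith
  ultimately have "\<beta> < 1" and "bin_kl (\<beta> - d) \<beta> \<le> bin_kl (measure P A) (measure Q A)"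
    using bin_kl_deviation[OF d bd] QA by blast+
  moreover have "KL2 (\<beta> - d) \<beta> = ereal (bin_kl (\<beta> - d) \<beta>)"
    using \<open>\<beta> < 1\<close> bd d by (intro KL2_eq_bin_kl) auto
  ultimately show ?thesis
    using KL_div_ge_bin_kl[OF Qs(1) Ps(1) A] unfolding \<beta>_def d_def by (metis ereal_less_eq(3) order_trans)
next
  case False
  then show ?thesis unfolding KL_div_def by simp
qed

lemma integral_two_valued:
  fixes \<alpha> \<gamma> :: real
  assumes Q: "prob_space Q" and B: "B \<in> sets Q"
  shows "integrable Q (\<lambda>y. if y \<in> B then \<alpha> else \<gamma>)"
    and "(\<integral>y. (if y \<in> B then \<alpha> else \<gamma>) \<partial>Q) = \<alpha> * measure Q B + \<gamma> * (1 - measure Q B)"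
proof -
  interpret Q: prob_space Q by fact
  have B': "space Q - B \<in> sets Q" using B by auto
  have split: "(if y \<in> B then \<alpha> else \<gamma>) = \<alpha> * indicator B y + \<gamma> * indicator (space Q - B) y"
    if "y \<in> space Q" for y
    using that by (auto simp: indicator_def)
  have int_B: "integrable Q (\<lambda>y. \<alpha> * indicator B y)"
    and int_B': "integrable Q (\<lambda>y. \<gamma> * indicator (space Q - B) y)"
    using B B' by (auto intro!: integrable_mult_right integrable_real_indicator simp: less_top[symmetric])
  show "integrable Q (\<lambda>y. if y \<in> B then \<alpha> else \<gamma>)"
    using Bochner_Integration.integrable_add[OF int_B int_B']
    by (subst Bochner_Integration.integrable_cong[OF refl split]) auto
  have "(\<integral>y. (if y \<in> B then \<alpha> else \<gamma>) \<partial>Q) = (\<integral>y. \<alpha> * indicator B y + \<gamma> * indicator (space Q - B) y \<partial>Q)"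
    by (rule Bochner_Integration.integral_cong[OF refl split])
  also have "\<dots> = \<alpha> * measure Q B + \<gamma> * measure Q (space Q - B)"
    using int_B int_B' B B' by (simp add: sets.Int_space_eq2)
  also have "\<dots> = \<alpha> * measure Q B + \<gamma> * (1 - measure Q B)"
    using Q.prob_compl[OF B] by simp
  finally show "(\<integral>y. (if y \<in> B then \<alpha> else \<gamma>) \<partial>Q) = \<alpha> * measure Q B + \<gamma> * (1 - measure Q B)" .
qed

text \<open>The extremal distributions: reweight \<open>Q\<close> by the factor \<open>c\<^sub>1\<close> on an event \<open>B\<close> and
  by \<open>c\<^sub>2\<close> off it.\<close>

definition tilt :: "'a measure \<Rightarrow> 'a set \<Rightarrow> real \<Rightarrow> real \<Rightarrow> 'a measure" where
  "tilt Q B c1 c2 = density Q (\<lambda>y. ennreal (if y \<in> B then c1 else c2))"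

lemma tilt_in_probs:
  assumes Q: "Q \<in> probs \<mu>" and B: "B \<in> sets \<mu>" and c: "0 < c1" "0 < c2"
    and total: "c1 * measure Q B + c2 * (1 - measure Q B) = 1"
  shows "tilt Q B c1 c2 \<in> probs \<mu>" and "absolutely_continuous Q (tilt Q B c1 c2)"
proof -
  note Qs = probsD[OF Q]
  have B_Q[measurable]: "B \<in> sets Q" using B Qs by simp
  define w where "w y = (if y \<in> B then c1 else c2)" for y
  have w_meas: "w \<in> borel_measurable Q" unfolding w_def by measurable
  have "emeasure (tilt Q B c1 c2) (space Q) = (\<integral>\<^sup>+ y. ennreal (w y) * indicator (space Q) y \<partial>Q)"
    unfolding tilt_def w_def[symmetric] using w_meas by (simp add: emeasure_density)
  also have "\<dots> = (\<integral>\<^sup>+ y. ennreal (w y) \<partial>Q)"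
    by (rule nn_integral_cong) (simp add: indicator_def)
  also have "\<dots> = ennreal (\<integral>y. w y \<partial>Q)"
    using integral_two_valued(1)[OF Qs(1) B_Q] c unfolding w_def
    by (intro nn_integral_eq_integral) auto
  also have "\<dots> = 1"
    using integral_two_valued(2)[OF Qs(1) B_Q] total unfolding w_def by simp
  finally have "prob_space (tilt Q B c1 c2)"
    by (intro prob_spaceI) (simp add: tilt_def)
  moreover show ac: "absolutely_continuous Q (tilt Q B c1 c2)"
    unfolding tilt_def by (intro absolutely_continuousI_density) measurable
  moreover have "absolutely_continuous \<mu> (tilt Q B c1 c2)"
    using Qs(4) ac unfolding absolutely_continuous_def by blast
  ultimately show "tilt Q B c1 c2 \<in> probs \<mu>"
    unfolding probs_def using Qs(2) by (simp add: tilt_def)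
qed

text \<open>The density of a tilted measure is the reweighting factor, so its divergence and its
  distance from \<open>Q\<close> are expectations of two-valued functions.\<close>

lemma tilt_divergence_and_distance:
  assumes sf: "sigma_finite_measure \<mu>" and Q: "Q \<in> probs \<mu>" and B: "B \<in> sets \<mu>"
    and c: "0 < c1" "0 < c2" and total: "c1 * measure Q B + c2 * (1 - measure Q B) = 1"
  shows "KL_div (tilt Q B c1 c2) Q
           = ereal (c1 * measure Q B * ln c1 + c2 * (1 - measure Q B) * ln c2)"
    and "TV \<mu> (tilt Q B c1 c2) Q = \<bar>c1 - 1\<bar> * measure Q B + \<bar>c2 - 1\<bar> * (1 - measure Q B)"
proof -
  interpret sigma_finite_measure \<mu> by fact
  note Qs = probsD[OF Q]
  interpret Q: prob_space Q by (rule Qs(1))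
  define P where "P = tilt Q B c1 c2"
  define w where "w y = (if y \<in> B then c1 else c2)" for y
  have B_Q[measurable]: "B \<in> sets Q" using B Qs by simp
  have w_pos: "0 < w y" for y unfolding w_def using c by simp
  have w_meas[measurable]: "w \<in> borel_measurable Q" "w \<in> borel_measurable \<mu>"
    using B unfolding w_def by measurable
  have P_eq: "P = density Q (\<lambda>y. ennreal (w y))" unfolding P_def tilt_def w_def ..
  have P_probs: "P \<in> probs \<mu>" and ac: "absolutely_continuous Q P"
    using tilt_in_probs[OF Q B c total] unfolding P_def by auto
  have sets_P: "sets P = sets Q" unfolding P_eq by simp
  have RN: "AE y in P. enn2real (RN_deriv Q P y) = w y"
  proof -
    have "AE y in Q. ennreal (w y) = RN_deriv Q P y"
      unfolding P_eq by (rule Q.RN_deriv_unique) auto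
    then have "AE y in P. ennreal (w y) = RN_deriv Q P y"
      by (rule absolutely_continuous_AE[OF sets_P ac])
    then show ?thesis by eventually_elim (metis enn2real_ennreal less_imp_le w_pos)
  qed
  have integral_P: "(\<integral>y. f y \<partial>P) = (\<integral>y. w y * f y \<partial>Q)" if [measurable]: "f \<in> borel_measurable Q" for f
    unfolding P_eq using w_pos by (subst integral_density) (auto intro: less_imp_le)
  have log_RN: "AE y in P. ln (enn2real (RN_deriv Q P y)) = (if y \<in> B then ln c1 else ln c2)"
    using RN by eventually_elim (simp add: w_def)
  have m_log: "(\<lambda>y. ln (enn2real (RN_deriv Q P y))) \<in> borel_measurable P"
    and m_step: "(\<lambda>y. if y \<in> B then ln c1 else ln c2) \<in> borel_measurable P"
    unfolding measurable_cong_sets[OF sets_P refl] by measurable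
  have "integrable P (\<lambda>y. if y \<in> B then ln c1 else ln c2)"
    using integral_two_valued(1)[OF probsD(1)[OF P_probs], of B] sets_P by simp
  then have "integrable P (\<lambda>y. ln (enn2real (RN_deriv Q P y)))"
    using integrable_cong_AE[OF m_log m_step log_RN] by simp
  moreover have "(\<integral>y. ln (enn2real (RN_deriv Q P y)) \<partial>P) = (\<integral>y. (if y \<in> B then ln c1 else ln c2) \<partial>P)"
    by (rule integral_cong_AE[OF m_log m_step log_RN])
  moreover have "\<dots> = (\<integral>y. w y * (if y \<in> B then ln c1 else ln c2) \<partial>Q)"
    by (rule integral_P) measurable
  moreover have "\<dots> = (\<integral>y. (if y \<in> B then c1 * ln c1 else c2 * ln c2) \<partial>Q)"
    unfolding w_def by (intro Bochner_Integration.integral_cong) auto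
  moreover have "\<dots> = c1 * measure Q B * ln c1 + c2 * (1 - measure Q B) * ln c2"
    using integral_two_valued(2)[OF Qs(1) B_Q] by simp
  ultimately show "KL_div (tilt Q B c1 c2) Q
      = ereal (c1 * measure Q B * ln c1 + c2 * (1 - measure Q B) * ln c2)"
    using ac sets_P unfolding KL_div_def P_def by simp
  \<comment> \<open>the \<open>\<mu>\<close>-density of \<open>P\<close> is \<open>w\<close> times that of \<open>Q\<close>\<close>
  have "P = density (density \<mu> (RN_deriv \<mu> Q)) (\<lambda>y. ennreal (w y))"
    by (simp only: P_eq density_RN_deriv[OF Qs(4) Qs(2)])
  also have "\<dots> = density \<mu> (\<lambda>y. RN_deriv \<mu> Q y * ennreal (w y))"
    by (rule density_density_eq) measurable
  finally have "P = density \<mu> (\<lambda>y. RN_deriv \<mu> Q y * ennreal (w y))" .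
  then have "AE y in \<mu>. RN_deriv \<mu> Q y * ennreal (w y) = RN_deriv \<mu> P y"
    by (intro RN_deriv_unique) measurable
  then have "AE y in \<mu>. \<bar>dens \<mu> P y - dens \<mu> Q y\<bar> = dens \<mu> Q y * \<bar>w y - 1\<bar>"
  proof eventually_elim
    case (elim y)
    then have "dens \<mu> P y = dens \<mu> Q y * w y"
      unfolding dens_def using w_pos[of y] by (metis enn2real_mult enn2real_ennreal less_imp_le)
    moreover have "dens \<mu> Q y * w y - dens \<mu> Q y = dens \<mu> Q y * (w y - 1)"
      by (simp add: algebra_simps)
    ultimately show ?case by (simp add: abs_mult dens_def)
  qed
  then have "TV \<mu> P Q = (\<integral>y. dens \<mu> Q y * \<bar>w y - 1\<bar> \<partial>\<mu>)"
    unfolding TV_def by (rule integral_cong_AE[rotated 2]) measurable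
  also have "\<dots> = (\<integral>y. \<bar>w y - 1\<bar> \<partial>Q)"
    using RN_deriv_integral[OF Q.sigma_finite_measure_axioms Qs(4) Qs(2), of "\<lambda>y. \<bar>w y - 1\<bar>"]
    unfolding dens_def by simp
  also have "\<dots> = (\<integral>y. (if y \<in> B then \<bar>c1 - 1\<bar> else \<bar>c2 - 1\<bar>) \<partial>Q)"
    by (intro Bochner_Integration.integral_cong) (auto simp: w_def)
  also have "\<dots> = \<bar>c1 - 1\<bar> * measure Q B + \<bar>c2 - 1\<bar> * (1 - measure Q B)"
    using integral_two_valued(2)[OF Qs(1) B_Q] by simp
  finally show "TV \<mu> (tilt Q B c1 c2) Q = \<bar>c1 - 1\<bar> * measure Q B + \<bar>c2 - 1\<bar> * (1 - measure Q B)"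
    unfolding P_def .
qed

lemma Dstar_le_at_event:
  assumes sf: "sigma_finite_measure \<mu>" and Q: "Q \<in> probs \<mu>" and B: "B \<in> sets \<mu>"
    and x: "measure Q B = x" "0 < x - d" "x < 1" "0 < d"
  shows "Dstar \<mu> (2 * d) Q \<le> ereal (bin_kl (x - d) x)"
proof -
  define c1 c2 where "c1 = (x - d) / x" and "c2 = (1 - (x - d)) / (1 - x)"
  have c: "0 < c1" "0 < c2" "c1 \<le> 1" "1 \<le> c2" using x unfolding c1_def c2_def by auto
  have mass: "c1 * x = x - d" "c2 * (1 - x) = 1 - (x - d)" using x unfolding c1_def c2_def by auto
  then have total: "c1 * measure Q B + c2 * (1 - measure Q B) = 1" using x by simp
  define P where "P = tilt Q B c1 c2"
  have P: "P \<in> probs \<mu>" using tilt_in_probs[OF Q B c(1,2) total] unfolding P_def by simp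
  have TV: "TV \<mu> P Q = 2 * d"
    using tilt_divergence_and_distance(2)[OF sf Q B c(1,2) total] mass c x unfolding P_def
    by (simp add: algebra_simps)
  have "bin_kl (x - d) x = (x - d) * ln c1 + (1 - (x - d)) * ln c2"
    unfolding bin_kl_def c1_def c2_def by simp
  then have KL: "KL_div P Q = ereal (bin_kl (x - d) x)"
    using tilt_divergence_and_distance(1)[OF sf Q B c(1,2) total] mass x unfolding P_def by simp
  have "KL_div P Q \<in> {KL_div P' Q | P'. P' \<in> probs \<mu> \<and> 2 * d \<le> TV \<mu> P' Q}"
    using P TV by auto
  then show ?thesis unfolding Dstar_def KL[symmetric] by (rule Inf_lower)
qed

text \<open>Upper bound: since \<open>\<beta>\<close> is approached by attained values \<open>x \<ge> \<beta>\<close> and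
  \<open>x \<mapsto> KL\<^sub>2(x - d, x)\<close> is continuous at \<open>\<beta>\<close>, the previous bound passes to the limit.\<close>

lemma Dstar_upper_bound:
  assumes sf: "sigma_finite_measure \<mu>" and Q: "Q \<in> probs \<mu>"
    and v: "0 < v" "v < 4 * (balance_coeff Q - 1/2)"
  shows "Dstar \<mu> v Q \<le> KL2 (balance_coeff Q - v/2) (balance_coeff Q)"
proof -
  define \<beta> d where "\<beta> = balance_coeff Q" and "d = v / 2"
  note Qs = probsD[OF Q]
  have \<beta>1: "\<beta> \<le> 1" unfolding \<beta>_def by (rule balance_coeff_le_1[OF Qs(1)])
  have d: "0 < d" "0 < \<beta> - d" using v \<beta>1 unfolding \<beta>_def d_def by auto
  have "Dstar \<mu> v Q \<le> KL2 (\<beta> - d) \<beta>"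
  proof (cases "\<beta> = 1")
    case True
    then have "KL2 (\<beta> - d) \<beta> = \<infinity>" using d unfolding KL2_def xlog_term_def by simp
    then show ?thesis by simp
  next
    case False
    then have \<beta>1: "\<beta> < 1" using \<beta>1 by simp
    define g where "g x = bin_kl (x - d) x" for x
    have at_value: "Dstar \<mu> v Q \<le> ereal (g x)"
      if x: "x \<in> range_meas Q" "1/2 \<le> x" "x < 1" for x
    proof -
      obtain B where "B \<in> sets \<mu>" "measure Q B = x" using x(1) Qs(2) unfolding range_meas_def by auto
      moreover have "\<beta> \<le> x" unfolding \<beta>_def using balance_coeff_le[OF Qs(1)] x by simp
      ultimately show ?thesis
        using Dstar_le_at_event[OF sf Q, of B x d] x d unfolding g_def d_def by simp
    qed
    have cont: "isCont g \<beta>" unfolding g_def bin_kl_def using d \<beta>1 by (auto intro!: continuous_intros)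
    have "Dstar \<mu> v Q \<le> ereal (g \<beta>)"
    proof (rule ereal_le_epsilon2)
      fix e :: real assume e: "0 < e"
      obtain \<delta> where \<delta>: "0 < \<delta>" "\<And>y. \<bar>y - \<beta>\<bar> < \<delta> \<Longrightarrow> \<bar>g y - g \<beta>\<bar> < e"
        using cont e unfolding continuous_at_eps_delta dist_real_def by blast
      \<comment> \<open>\<open>\<beta>\<close> is an infimum, so some attained value lies in \<open>[\<beta>, \<beta> + \<delta>)\<close>\<close>
      have "1 \<in> {x \<in> range_meas Q. 1/2 \<le> x}" using one_in_range_meas[OF Qs(1)] by simp
      moreover have "Inf {x \<in> range_meas Q. 1/2 \<le> x} < min (\<beta> + \<delta>) 1"
        using \<delta> \<beta>1 unfolding \<beta>_def balance_coeff_def by simp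
      ultimately obtain x where x: "x \<in> range_meas Q" "1/2 \<le> x" "x < min (\<beta> + \<delta>) 1"
        using cInf_lessD[of "{x \<in> range_meas Q. 1/2 \<le> x}"] by blast
      have "\<beta> \<le> x" unfolding \<beta>_def using balance_coeff_le[OF Qs(1)] x by simp
      have "Dstar \<mu> v Q \<le> ereal (g x)" using at_value x by simp
      also have "\<dots> \<le> ereal (g \<beta> + e)" using \<delta>(2)[of x] x \<open>\<beta> \<le> x\<close> by simp
      finally show "Dstar \<mu> v Q \<le> ereal (g \<beta>) + ereal e" by simp
    qed
    moreover have "KL2 (\<beta> - d) \<beta> = ereal (g \<beta>)"
      unfolding g_def using d \<beta>1 by (intro KL2_eq_bin_kl) auto
    ultimately show ?thesis by simp
  qed
  then show ?thesis unfolding \<beta>_def d_def .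
qed

theorem theorem1:
  fixes \<mu> Q :: "'a measure" and v :: real
  assumes "sigma_finite_measure \<mu>"
    and "Q \<in> probs \<mu>"
    and "balance_coeff Q > 1/2"
    and "0 < v" and "v < 4 * (balance_coeff Q - 1/2)"
  shows "Dstar \<mu> v Q = KL2 (balance_coeff Q - v/2) (balance_coeff Q)"
proof (rule antisym)
  show "Dstar \<mu> v Q \<le> KL2 (balance_coeff Q - v/2) (balance_coeff Q)"
    by (rule Dstar_upper_bound[OF assms(1,2,4,5)])
  show "KL2 (balance_coeff Q - v/2) (balance_coeff Q) \<le> Dstar \<mu> v Q"
    unfolding Dstar_def
  proof (rule Inf_greatest)
    fix k assume "k \<in> {KL_div P Q |P. P \<in> probs \<mu> \<and> v \<le> TV \<mu> P Q}"
    then obtain P where P: "P \<in> probs \<mu>" "v \<le> TV \<mu> P Q" and k: "k = KL_div P Q" by blast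
    show "KL2 (balance_coeff Q - v/2) (balance_coeff Q) \<le> k"
      unfolding k by (rule KL_div_lower_bound[OF assms(1,2) P(1) assms(4,5) P(2)])
  qed
qed

end
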